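(* Let $S\in\mathcal S(n)$, let $k\le n$, let $L\ge n$ with $\tau=L/\sqrt{nk}$ and suppose $M=2L/\tau+k$ is an integer. Let $P_0$ be a $\tau$-post and suppose the $k\times M$ $\tau$-fence-tree with root $P_0$ exists in $S$, with nodes $P_i^m=(X_i^m,Y_i^m)$, and put $\Delta x=X_k^M-X_1^1$. Then (a) the path in the tree from the root $P_1^1$ to $P_k^M$ (the concatenation of the tree edges along it) has length at most $4L+3\tau\Delta x$; and (b) the total length of all edges of the tree is at most $k(3L+3\tau\Delta x)$.
   Context: Setting: $\mathcal S(n)$ is the class of scenes in the plane consisting of finitely many non-overlapping axis-parallel rectangular obstacles of width and height at least $1$, with integral corner $x$-coordinates, start $s=(0,0)$ and target the vertical line ("wall") $x=n$. Up/down/right mean the $+y$/$-y$/$+x$ directions. A $\tau$-post is a vertical segment of height $2\tau$ contained in the left edge of an obstacle; it is identified with its center point. A $\tau$-path from a point $(x,y_0)$ is the path obtained by moving right along the line $y=y_0$: when an obstacle is hit whose nearest corner is at distance less than $\tau$, the path goes around that corner to the point on the opposite (right) side of the obstacle with $y$-coordinate $y_0$ and continues right; when an obstacle is hit whose nearest corner is at distance at least $\tau$, the path stops, and the $\tau$-post centered at the hit point is the end of the path; if the wall is reached the path stops there. For a $\tau$-post $P$, its up-child (resp. down-child) is the $\tau$-post at the end of the $\tau$-path starting from the top (resp. bottom) endpoint of $P$ (undefined if that $\tau$-path reaches the wall); the up-edge (resp. down-edge) from $P$ to that child is the vertical segment of length $\tau$ from the center of $P$ to its top (resp. bottom) endpoint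 followed by that $\tau$-path. The $k\times M$ $\tau$-fence-tree with root $P_0$ is the binary tree with nodes $P_i^m$, $1\le i\le k$, $1\le m\le M$, defined by: $P_1^1=P_0$; $P_1^m$ is the up-child of $P_1^{m-1}$ for $m\ge2$; $P_i^1$ is the down-child of $P_{i-1}^1$ for $i\ge2$; and for $i,m\ge2$, $P_i^m$ is the down-child of $P_{i-1}^m$ if $X_{i-1}^m> X_i^{m-1}$, and the up-child of $P_i^{m-1}$ otherwise. Its edges are the corresponding up- and down-edges from each node to its children. The tree is said to exist in $S$ if all these children are defined (no $\tau$-path used reaches the wall). *)

theory Defs
  imports Complex_Main
begin

record rect =
  rx1 :: real
  rx2 :: real
  ry1 :: real
  ry2 :: real

text \<open>The class S(n): finitely many non-overlapping (disjoint interiors) rectangles of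
  width and height at least 1 with integral x-coordinates of corners; the start (0,0)
  is not in the interior of an obstacle; the target is the wall x = n.\<close>
definition scene :: "nat \<Rightarrow> rect set \<Rightarrow> bool" where
  "scene n S \<longleftrightarrow> finite S \<and>
     (\<forall>R\<in>S. rx1 R + 1 \<le> rx2 R \<and> ry1 R + 1 \<le> ry2 R \<and> rx1 R \<in> \<int> \<and> rx2 R \<in> \<int>) \<and>
     (\<forall>R\<in>S. \<forall>R'\<in>S. R \<noteq> R' \<longrightarrow>
        \<not> (rx1 R < rx2 R' \<and> rx1 R' < rx2 R \<and> ry1 R < ry2 R' \<and> ry1 R' < ry2 R)) \<and>
     (\<forall>R\<in>S. \<not> (rx1 R < 0 \<and> 0 < rx2 R \<and> ry1 R < 0 \<and> 0 < ry2 R))"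

definition hits :: "rect set \<Rightarrow> real \<Rightarrow> real \<Rightarrow> rect set" where
  "hits S x y = {R\<in>S. x \<le> rx1 R \<and> ry1 R \<le> y \<and> y \<le> ry2 R}"

text \<open>The first obstacle hit (one with minimal left x-coordinate; ties, which can only
  occur at a shared corner, are resolved by an unspecified choice).\<close>
definition first_hit :: "rect set \<Rightarrow> real \<Rightarrow> real \<Rightarrow> rect" where
  "first_hit S x y = (SOME R. R \<in> hits S x y \<and> (\<forall>R'\<in>hits S x y. rx1 R \<le> rx1 R'))"

text \<open>Result: (Some X, len) if the path ends at the
  tau-post centred at (X, y), (None, len) if it reaches the wall x = n; len is the
  length of the path. Going around a corner at distance d of an obstacle of width w
  costs 2d + w.\<close>
fun tpath :: "rect set \<Rightarrow> nat \<Rightarrow> real \<Rightarrow> nat \<Rightarrow> real \<Rightarrow> real \<Rightarrow> real option \<times> real" where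
  "tpath S n tau 0 x y = (None, real n - x)"
| "tpath S n tau (Suc f) x y =
     (if hits S x y = {} then (None, real n - x)
      else (let R = first_hit S x y; d = min (y - ry1 R) (ry2 R - y) in
        if real n \<le> rx1 R then (None, real n - x)
        else if d < tau then
          (case tpath S n tau f (rx2 R) y of (r, l) \<Rightarrow>
             (r, (rx1 R - x) + 2 * d + (rx2 R - rx1 R) + l))
        else (Some (rx1 R), rx1 R - x)))"

text \<open>Enough fuel: every detour passes a different obstacle.\<close>
definition tau_path :: "rect set \<Rightarrow> nat \<Rightarrow> real \<Rightarrow> real \<times> real \<Rightarrow> real option \<times> real" where
  "tau_path S n tau p = tpath S n tau (Suc (card S)) (fst p) (snd p)"

definition is_post :: "rect set \<Rightarrow> real \<Rightarrow> real \<times> real \<Rightarrow> bool" where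
  "is_post S tau P \<longleftrightarrow> (\<exists>R\<in>S. fst P = rx1 R \<and> ry1 R \<le> snd P - tau \<and> snd P + tau \<le> ry2 R)"

text \<open>Up-/down-child (the centre of the post); meaningful only when defined.\<close>
definition up_child :: "rect set \<Rightarrow> nat \<Rightarrow> real \<Rightarrow> real \<times> real \<Rightarrow> real \<times> real" where
  "up_child S n tau P = (the (fst (tau_path S n tau (fst P, snd P + tau))), snd P + tau)"

definition down_child :: "rect set \<Rightarrow> nat \<Rightarrow> real \<Rightarrow> real \<times> real \<Rightarrow> real \<times> real" where
  "down_child S n tau P = (the (fst (tau_path S n tau (fst P, snd P - tau))), snd P - tau)"

section \<open>Fence tree (0-based indices: ftree i m = P_{i+1}^{m+1})\<close>

fun ftree :: "rect set \<Rightarrow> nat \<Rightarrow> real \<Rightarrow> real \<times> real \<Rightarrow> nat \<Rightarrow> nat \<Rightarrow> real \<times> real" where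
  "ftree S n tau P0 0 0 = P0"
| "ftree S n tau P0 0 (Suc m) = up_child S n tau (ftree S n tau P0 0 m)"
| "ftree S n tau P0 (Suc i) 0 = down_child S n tau (ftree S n tau P0 i 0)"
| "ftree S n tau P0 (Suc i) (Suc m) =
     (if fst (ftree S n tau P0 i (Suc m)) > fst (ftree S n tau P0 (Suc i) m)
      then down_child S n tau (ftree S n tau P0 i (Suc m))
      else up_child S n tau (ftree S n tau P0 (Suc i) m))"

text \<open>For a non-root node (i,m): its parent and whether the edge is an up-edge.\<close>
fun parent :: "rect set \<Rightarrow> nat \<Rightarrow> real \<Rightarrow> real \<times> real \<Rightarrow> nat \<Rightarrow> nat \<Rightarrow> (nat \<times> nat) \<times> bool" where
  "parent S n tau P0 0 0 = ((0, 0), True)"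
| "parent S n tau P0 0 (Suc m) = ((0, m), True)"
| "parent S n tau P0 (Suc i) 0 = ((i, 0), False)"
| "parent S n tau P0 (Suc i) (Suc m) =
     (if fst (ftree S n tau P0 i (Suc m)) > fst (ftree S n tau P0 (Suc i) m)
      then ((i, Suc m), False) else ((Suc i, m), True))"

definition edge_path :: "rect set \<Rightarrow> nat \<Rightarrow> real \<Rightarrow> real \<times> real \<Rightarrow> nat \<Rightarrow> nat \<Rightarrow> real option \<times> real" where
  "edge_path S n tau P0 i m =
     (let ((pi, pm), up) = parent S n tau P0 i m; Q = ftree S n tau P0 pi pm in
      tau_path S n tau (fst Q, if up then snd Q + tau else snd Q - tau))"

text \<open>Length of the edge into (i,m): vertical segment of length tau plus the tau-path.\<close>
definition edge_len :: "rect set \<Rightarrow> nat \<Rightarrow> real \<Rightarrow> real \<times> real \<Rightarrow> nat \<Rightarrow> nat \<Rightarrow> real" where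
  "edge_len S n tau P0 i m = tau + snd (edge_path S n tau P0 i m)"

definition fence_tree_exists :: "rect set \<Rightarrow> nat \<Rightarrow> real \<Rightarrow> real \<times> real \<Rightarrow> nat \<Rightarrow> nat \<Rightarrow> bool" where
  "fence_tree_exists S n tau P0 k M \<longleftrightarrow>
     (\<forall>i<k. \<forall>m<M. (i, m) \<noteq> (0, 0) \<longrightarrow> fst (edge_path S n tau P0 i m) \<noteq> None)"

fun root_path_len :: "rect set \<Rightarrow> nat \<Rightarrow> real \<Rightarrow> real \<times> real \<Rightarrow> nat \<Rightarrow> nat \<Rightarrow> real" where
  "root_path_len S n tau P0 0 0 = 0"
| "root_path_len S n tau P0 0 (Suc m) = edge_len S n tau P0 0 (Suc m) + root_path_len S n tau P0 0 m"
| "root_path_len S n tau P0 (Suc i) 0 = edge_len S n tau P0 (Suc i) 0 + root_path_len S n tau P0 i 0"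
| "root_path_len S n tau P0 (Suc i) (Suc m) = edge_len S n tau P0 (Suc i) (Suc m) +
     (if fst (ftree S n tau P0 i (Suc m)) > fst (ftree S n tau P0 (Suc i) m)
      then root_path_len S n tau P0 i (Suc m) else root_path_len S n tau P0 (Suc i) m)"

definition total_edge_len :: "rect set \<Rightarrow> nat \<Rightarrow> real \<Rightarrow> real \<times> real \<Rightarrow> nat \<Rightarrow> nat \<Rightarrow> real" where
  "total_edge_len S n tau P0 k M =
     (\<Sum>im \<in> ({..<k} \<times> {..<M}) - {(0, 0)}. edge_len S n tau P0 (fst im) (snd im))"

end

theory Submission
  imports Defs
begin

text \<open>A \<open>\<tau>\<close>-path that ends at a post only ever detours around corners closer than \<open>\<tau>\<close>, and every
  obstacle is at least one unit wide, so a detour costs at most \<open>2\<tau>\<close> per unit of horizontal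
  progress: a \<open>\<tau>\<close>-path from \<open>x\<close> to a post at \<open>X\<close> has length at most \<open>(1 + 2\<tau>)(X - x)\<close>.
  Hence every tree edge costs \<open>\<tau>\<close> plus \<open>(1 + 2\<tau>)\<close> times the gain in \<open>x\<close> from its parent.
  Since the parent of an inner node is the neighbour further to the right, \<open>x\<close> is monotone in
  both tree indices, so the gains telescope, along the root path as well as along each
  row of the tree. The choice \<open>\<tau> = L / \<surd>(nk)\<close> gives \<open>\<tau> \<ge> 1\<close> and \<open>k\<tau> \<le> L\<close>, and \<open>M\<tau> = 2L + k\<tau>\<close>
  then turns the resulting bounds into the stated ones.\<close>

lemma first_hit_in_hits:
  assumes "finite S" "hits S x y \<noteq> {}"
  shows "first_hit S x y \<in> hits S x y"
proof -
  let ?H = "hits S x y"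
  have "finite ?H" using assms(1) unfolding hits_def by simp
  then have "arg_min_on rx1 ?H \<in> ?H" "\<forall>R'\<in>?H. rx1 (arg_min_on rx1 ?H) \<le> rx1 R'"
    using assms(2) by (auto intro: arg_min_if_finite arg_min_least)
  then show ?thesis
    unfolding first_hit_def by (rule someI2[where Q = "\<lambda>R. R \<in> ?H", OF conjI]) blast+
qed

lemma tpath_end_bound:
  assumes wide: "\<forall>R\<in>S. rx1 R + 1 \<le> rx2 R" and "finite S" and "0 \<le> tau"
  shows "tpath S n tau f x y = (Some X, l) \<Longrightarrow> x \<le> X \<and> l \<le> (1 + 2 * tau) * (X - x)"
proof (induction f arbitrary: x X l)
  case 0
  then show ?case by simp
next
  case (Suc f)
  have hit: "hits S x y \<noteq> {}" using Suc.prems by (auto split: if_splits)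
  define R where "R = first_hit S x y"
  define d where "d = min (y - ry1 R) (ry2 R - y)"
  have "R \<in> hits S x y" using first_hit_in_hits[OF \<open>finite S\<close> hit] R_def by simp
  then have R: "R \<in> S" "x \<le> rx1 R" "ry1 R \<le> y" "y \<le> ry2 R" unfolding hits_def by auto
  have before_wall: "\<not> real n \<le> rx1 R"
    using Suc.prems hit by (auto simp: Let_def R_def split: if_splits)
  have "0 \<le> tau * (rx1 R - x)" using R(2) \<open>0 \<le> tau\<close> by simp
  then have approach: "rx1 R - x \<le> (1 + 2 * tau) * (rx1 R - x)"
    by (simp add: algebra_simps)
  show ?case
  proof (cases "d < tau")
    case True
    obtain r l' where rest: "tpath S n tau f (rx2 R) y = (r, l')"
      by (cases "tpath S n tau f (rx2 R) y")
    have "(r, (rx1 R - x) + 2 * d + (rx2 R - rx1 R) + l') = (Some X, l)"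
      using Suc.prems hit before_wall True rest
      by (simp add: Let_def R_def[symmetric] d_def[symmetric])
    then have r: "r = Some X" and l: "l = (rx1 R - x) + 2 * d + (rx2 R - rx1 R) + l'"
      by auto
    have IH: "rx2 R \<le> X" "l' \<le> (1 + 2 * tau) * (X - rx2 R)"
      using Suc.IH[of "rx2 R" X l'] rest r by auto
    have "rx1 R + 1 \<le> rx2 R" using wide R(1) by blast
    then have "tau \<le> tau * (rx2 R - rx1 R)"
      using mult_left_mono[of 1 "rx2 R - rx1 R" tau] \<open>0 \<le> tau\<close> by simp
    then have detour: "2 * d + (rx2 R - rx1 R) \<le> (1 + 2 * tau) * (rx2 R - rx1 R)"
      using True by (simp add: algebra_simps)
    have "l \<le> (1 + 2 * tau) * (rx1 R - x) + (1 + 2 * tau) * (rx2 R - rx1 R)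
              + (1 + 2 * tau) * (X - rx2 R)"
      using l IH(2) detour approach by linarith
    also have "\<dots> = (1 + 2 * tau) * (X - x)" by (simp add: algebra_simps)
    finally show ?thesis using IH(1) R(2) \<open>rx1 R + 1 \<le> rx2 R\<close> by simp
  next
    case False
    have "(Some (rx1 R), rx1 R - x) = (Some X, l)"
      using Suc.prems hit before_wall False
      by (simp add: Let_def R_def[symmetric] d_def[symmetric])
    then show ?thesis using R(2) approach by auto
  qed
qed

lemma tau_path_end_bound:
  assumes "\<forall>R\<in>S. rx1 R + 1 \<le> rx2 R" "finite S" "0 \<le> tau"
    and "tau_path S n tau (x, y) = (Some X, l)"
  shows "x \<le> X \<and> l \<le> (1 + 2 * tau) * (X - x)"
  using assms(4) unfolding tau_path_def fst_conv snd_conv by (rule tpath_end_bound[OF assms(1-3)])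

context
  fixes S :: "rect set" and n :: nat and tau :: real and P0 :: "real \<times> real"
begin

abbreviation node_x :: "nat \<Rightarrow> nat \<Rightarrow> real" where
  "node_x i m \<equiv> fst (ftree S n tau P0 i m)"

lemma parent_index:
  assumes "parent S n tau P0 i m = ((i', m'), up)" "(i, m) \<noteq> (0, 0)"
  shows "i' \<le> i \<and> m' \<le> m \<and> Suc (i' + m') = i + m"
  using assms by (cases i; cases m) (auto split: if_splits)

lemma node_x_left_le_parent:
  assumes "parent S n tau P0 i m = ((i', m'), up)" "0 < m"
  shows "node_x i (m - 1) \<le> node_x i' m'"
  using assms by (cases i; cases m) (auto split: if_splits)

lemma node_x_prev_row_le_parent:
  assumes "parent S n tau P0 i m = ((i', m'), up)" "0 < i"
  shows "node_x (i - 1) m \<le> node_x i' m'"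
  using assms by (cases i; cases m) (auto split: if_splits)

lemma node_x_eq_edge_path_end:
  assumes "(i, m) \<noteq> (0, 0)"
  shows "node_x i m = the (fst (edge_path S n tau P0 i m))"
  using assms
  by (cases i; cases m) (auto simp: edge_path_def up_child_def down_child_def Let_def)

lemma root_path_len_parent:
  assumes "parent S n tau P0 i m = ((i', m'), up)" "(i, m) \<noteq> (0, 0)"
  shows "root_path_len S n tau P0 i m = edge_len S n tau P0 i m + root_path_len S n tau P0 i' m'"
  using assms by (cases i; cases m) (auto split: if_splits)

text \<open>Vanishes at the root (\<open>0 - 1 = 0\<close> in \<^typ>\<open>nat\<close>), so the root may join the sum over edges.\<close>
definition row_gain :: "nat \<Rightarrow> nat \<Rightarrow> real" where
  "row_gain i m =
    (if m = 0 then node_x i 0 - node_x (i - 1) 0 else node_x i m - node_x i (m - 1))"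

lemma sum_row_gain: "(\<Sum>m<Suc N. row_gain i m) = node_x i N - node_x (i - 1) 0"
  by (induction N) (simp_all add: row_gain_def)

context
  fixes k M :: nat
  assumes wide: "\<forall>R\<in>S. rx1 R + 1 \<le> rx2 R" and "finite S" and "0 \<le> tau"
    and exists: "fence_tree_exists S n tau P0 k M"
begin

lemma edge_len_le:
  assumes "parent S n tau P0 i m = ((i', m'), up)" "(i, m) \<noteq> (0, 0)" "i < k" "m < M"
  shows "node_x i' m' \<le> node_x i m \<and>
    edge_len S n tau P0 i m \<le> tau + (1 + 2 * tau) * (node_x i m - node_x i' m')"
proof -
  let ?Q = "ftree S n tau P0 i' m'"
  have path: "edge_path S n tau P0 i m =
      tau_path S n tau (fst ?Q, if up then snd ?Q + tau else snd ?Q - tau)"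
    using assms(1) by (simp add: edge_path_def Let_def)
  have "fst (edge_path S n tau P0 i m) \<noteq> None"
    using exists assms(2-4) unfolding fence_tree_exists_def by blast
  then obtain l where "edge_path S n tau P0 i m = (Some (node_x i m), l)"
    using node_x_eq_edge_path_end[OF assms(2)] by (cases "edge_path S n tau P0 i m") auto
  with path have "tau_path S n tau (node_x i' m', if up then snd ?Q + tau else snd ?Q - tau)
      = (Some (node_x i m), l)" by simp
  from tau_path_end_bound[OF wide \<open>finite S\<close> \<open>0 \<le> tau\<close> this] show ?thesis
    using \<open>edge_path S n tau P0 i m = (Some (node_x i m), l)\<close> by (simp add: edge_len_def)
qed

lemma node_x_le_Suc_col:
  assumes "i < k" "Suc m < M"
  shows "node_x i m \<le> node_x i (Suc m)"
proof -
  obtain i' m' up where p: "parent S n tau P0 i (Suc m) = ((i', m'), up)"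
    by (metis prod.exhaust)
  show ?thesis
    using node_x_left_le_parent[OF p] edge_len_le[OF p] assms by simp
qed

lemma node_x_le_Suc_row:
  assumes "Suc i < k" "m < M"
  shows "node_x i m \<le> node_x (Suc i) m"
proof -
  obtain i' m' up where p: "parent S n tau P0 (Suc i) m = ((i', m'), up)"
    by (metis prod.exhaust)
  show ?thesis
    using node_x_prev_row_le_parent[OF p] edge_len_le[OF p] assms by simp
qed

lemma node_x_mono:
  assumes "i \<le> i'" "m \<le> m'" "i' < k" "m' < M"
  shows "node_x i m \<le> node_x i' m'"
proof -
  have "node_x i m \<le> node_x i m'"
    using assms(2,4)
  proof (induction m' rule: dec_induct)
    case (step m'')
    then show ?case using node_x_le_Suc_col[of i m''] assms(1,3) by simp
  qed simp
  also have "\<dots> \<le> node_x i' m'"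
    using assms(1,3)
  proof (induction i' rule: dec_induct)
    case (step i'')
    then show ?case using node_x_le_Suc_row[of i'' m'] assms(4) by simp
  qed simp
  finally show ?thesis .
qed

lemma root_path_len_le:
  "i < k \<Longrightarrow> m < M \<Longrightarrow>
    root_path_len S n tau P0 i m \<le> real (i + m) * tau + (1 + 2 * tau) * (node_x i m - node_x 0 0)"
proof (induction "i + m" arbitrary: i m rule: less_induct)
  case less
  show ?case
  proof (cases "(i, m) = (0, 0)")
    case False
    obtain i' m' up where p: "parent S n tau P0 i m = ((i', m'), up)"
      by (metis prod.exhaust)
    have idx: "i' \<le> i" "m' \<le> m" "Suc (i' + m') = i + m"
      using parent_index[OF p False] by auto
    have "root_path_len S n tau P0 i' m'
        \<le> real (i' + m') * tau + (1 + 2 * tau) * (node_x i' m' - node_x 0 0)"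
      using less idx by simp
    moreover have "edge_len S n tau P0 i m \<le> tau + (1 + 2 * tau) * (node_x i m - node_x i' m')"
      using edge_len_le[OF p False less.prems] by simp
    moreover have "(1 + 2 * tau) * (node_x i m - node_x i' m')
        + (1 + 2 * tau) * (node_x i' m' - node_x 0 0) = (1 + 2 * tau) * (node_x i m - node_x 0 0)"
      by (simp add: algebra_simps)
    ultimately show ?thesis
      using root_path_len_parent[OF p False] idx(3)[symmetric] by (simp add: algebra_simps)
  qed simp
qed


lemma edge_len_le_row_gain:
  assumes "(i, m) \<noteq> (0, 0)" "i < k" "m < M"
  shows "edge_len S n tau P0 i m \<le> tau + (1 + 2 * tau) * row_gain i m"
proof -
  obtain i' m' up where p: "parent S n tau P0 i m = ((i', m'), up)"
    by (metis prod.exhaust)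
  have "node_x i m - node_x i' m' \<le> row_gain i m"
    using node_x_left_le_parent[OF p] node_x_prev_row_le_parent[OF p] assms(1)
    by (auto simp: row_gain_def)
  then have "(1 + 2 * tau) * (node_x i m - node_x i' m') \<le> (1 + 2 * tau) * row_gain i m"
    using \<open>0 \<le> tau\<close> by (intro mult_left_mono) auto
  then show ?thesis
    using edge_len_le[OF p assms] by simp
qed

lemma total_edge_len_le:
  assumes "0 < k" "0 < M"
  shows "total_edge_len S n tau P0 k M
    \<le> real (k * M - 1) * tau + (1 + 2 * tau) * (real k * (node_x (k - 1) (M - 1) - node_x 0 0))"
proof -
  let ?A = "{..<k} \<times> {..<M}"
  have root: "(0, 0) \<in> ?A" using assms by simp
  have "total_edge_len S n tau P0 k M
      \<le> (\<Sum>(i, m)\<in>?A - {(0, 0)}. tau + (1 + 2 * tau) * row_gain i m)"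
    unfolding total_edge_len_def
    by (intro sum_mono) (auto intro!: edge_len_le_row_gain)
  also have "\<dots> = real (k * M - 1) * tau + (1 + 2 * tau) * (\<Sum>(i, m)\<in>?A - {(0, 0)}. row_gain i m)"
    using root by (simp add: sum.distrib sum_distrib_left card_cartesian_product case_prod_beta)
  also have "(\<Sum>(i, m)\<in>?A - {(0, 0)}. row_gain i m) = (\<Sum>(i, m)\<in>?A. row_gain i m)"
    using root by (simp add: sum_diff1 row_gain_def)
  also have "\<dots> = (\<Sum>i<k. \<Sum>m<M. row_gain i m)"
    by (simp add: sum.cartesian_product)
  also have "\<dots> \<le> (\<Sum>i<k. node_x (k - 1) (M - 1) - node_x 0 0)"
  proof (rule sum_mono)
    fix i assume "i \<in> {..<k}"
    then have "node_x i (M - 1) \<le> node_x (k - 1) (M - 1)" "node_x 0 0 \<le> node_x (i - 1) 0"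
      using node_x_mono[of i "k - 1" "M - 1" "M - 1"]
        node_x_mono[of 0 "i - 1" 0 0] assms by auto
    moreover have "(\<Sum>m<M. row_gain i m) = node_x i (M - 1) - node_x (i - 1) 0"
      using sum_row_gain[of i "M - 1"] assms by simp
    ultimately show "(\<Sum>m<M. row_gain i m) \<le> node_x (k - 1) (M - 1) - node_x 0 0" by simp
  qed
  finally show ?thesis
    using \<open>0 \<le> tau\<close> by (simp add: mult_left_mono)
qed

end

end

lemma fence_tree_parameters:
  assumes "1 \<le> k" "k \<le> n" "real n \<le> L" "tau = L / sqrt (real n * real k)"
  shows "1 \<le> tau" "real k * tau \<le> L"
proof -
  define s where "s = sqrt (real n * real k)"
  have "real k \<le> s"
    using real_sqrt_le_mono[of "real k * real k" "real n * real k"] assms(2)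
    unfolding s_def by (simp add: mult_right_mono)
  moreover have "s \<le> real n"
    using real_sqrt_le_mono[of "real n * real k" "real n * real n"] assms(2)
    unfolding s_def by (simp add: mult_left_mono)
  ultimately have "0 < s" "s \<le> L" using assms(1,3) by simp_all
  then show "1 \<le> tau" using assms(4) s_def by simp
  have "real k * tau = real k * L / s" using assms(4) s_def by simp
  also have "\<dots> \<le> L" using \<open>real k \<le> s\<close> \<open>0 < s\<close> \<open>s \<le> L\<close>
    by (simp add: divide_le_eq mult_right_mono)
  finally show "real k * tau \<le> L" .
qed

theorem theorem2:
  fixes n k M :: nat and L tau :: real and S :: "rect set" and P0 :: "real \<times> real"
  assumes "scene n S"
    and "1 \<le> k" and "k \<le> n"
    and "real n \<le> L"
    and "tau = L / sqrt (real n * real k)"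
    and "real M = 2 * L / tau + real k"
    and "is_post S tau P0"
    and "fence_tree_exists S n tau P0 k M"
  shows "root_path_len S n tau P0 (k - 1) (M - 1)
           \<le> 4 * L + 3 * tau * (fst (ftree S n tau P0 (k - 1) (M - 1)) - fst P0)
         \<and> total_edge_len S n tau P0 k M
           \<le> real k * (3 * L + 3 * tau * (fst (ftree S n tau P0 (k - 1) (M - 1)) - fst P0))"
proof -
  have wide: "\<forall>R\<in>S. rx1 R + 1 \<le> rx2 R" and "finite S"
    using assms(1) unfolding scene_def by auto
  have "1 \<le> tau" and k_tau: "real k * tau \<le> L"
    using fence_tree_parameters[OF assms(2-5)] by auto
  then have M_tau: "real M * tau = 2 * L + real k * tau"
    using assms(6) by (simp add: field_simps)
  have "0 \<le> 2 * L / tau" using assms(4) \<open>1 \<le> tau\<close> by simp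
  then have "k \<le> M" using assms(6) by linarith
  then have "0 < k" "0 < M" using assms(2) by auto
  have "0 \<le> tau" using \<open>1 \<le> tau\<close> by simp
  note tree = wide \<open>finite S\<close> \<open>0 \<le> tau\<close> assms(8)
  define D where "D = fst (ftree S n tau P0 (k - 1) (M - 1)) - fst P0"
  have "0 \<le> D"
    using node_x_mono[OF tree, of 0 "k - 1" 0 "M - 1"] \<open>0 < k\<close> \<open>0 < M\<close> by (simp add: D_def)
  then have gain: "(1 + 2 * tau) * D \<le> 3 * tau * D"
    using mult_right_mono[OF \<open>1 \<le> tau\<close>] by (simp add: algebra_simps)
  have "root_path_len S n tau P0 (k - 1) (M - 1) \<le> real (k - 1 + (M - 1)) * tau + (1 + 2 * tau) * D"
    using root_path_len_le[OF tree, of "k - 1" "M - 1"] \<open>0 < k\<close> \<open>0 < M\<close> by (simp add: D_def)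
  also have "\<dots> \<le> (real k + real M) * tau + 3 * tau * D"
    using \<open>1 \<le> tau\<close> by (intro add_mono[OF mult_right_mono gain]) auto
  also have "\<dots> \<le> 4 * L + 3 * tau * D"
    unfolding distrib_right using M_tau k_tau by linarith
  finally have root: "root_path_len S n tau P0 (k - 1) (M - 1) \<le> 4 * L + 3 * tau * D" .
  have "total_edge_len S n tau P0 k M \<le> real (k * M - 1) * tau + (1 + 2 * tau) * (real k * D)"
    using total_edge_len_le[OF tree] \<open>0 < k\<close> \<open>0 < M\<close> by (simp add: D_def)
  also have "\<dots> \<le> real k * (real M * tau) + real k * (3 * tau * D)"
    using \<open>1 \<le> tau\<close> \<open>0 < k\<close> \<open>0 < M\<close> mult_left_mono[OF gain, of "real k"]
    by (intro add_mono) (simp_all add: of_nat_diff algebra_simps)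
  also have "\<dots> \<le> real k * (3 * L + 3 * tau * D)"
    unfolding distrib_left using M_tau k_tau by (simp add: mult_left_mono)
  finally show ?thesis
    using root unfolding D_def by simp
qed

end
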